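(* Let $X\sim F$ be a real random variable with $P_F(a\le|X|\le b)=1$, where $0<a<b<\infty$, and let $\sigma^2=\sigma^2(F)=\mathrm{Var}_F(X)$. Let $$K^2=\frac{4}{\big(\frac ba+\frac ab\big)^2}$$ (with $K>0$), and let $\alpha$ satisfy $1-K^2<\alpha<1$. Then, with $c^2 = 1-\frac{\sqrt{1-\alpha}}{K}$ (which lies in $(0,1)$), $$P_F\Big(\sigma^2\le\frac{X^2}{c^2}\Big)\ge1-\alpha.$$ *)

theory Defs
  imports "HOL-Probability.Probability"
begin

end

theory Submission
  imports Defs
begin

text \<open>
  Put \<open>Y = X\<^sup>2\<close>, so that \<open>a\<^sup>2 \<le> Y \<le> b\<^sup>2\<close> almost surely and \<open>\<sigma>\<^sup>2 \<le> E Y\<close>. The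
  Paley--Zygmund inequality bounds \<open>P(Y \<ge> c\<^sup>2 E Y)\<close> below by \<open>(1 - c\<^sup>2)\<^sup>2 (E Y)\<^sup>2 / E(Y\<^sup>2)\<close>,
  and for a variable confined to \<open>[m, M]\<close> with \<open>m > 0\<close> the reverse Cauchy--Schwarz
  (Kantorovich) inequality gives \<open>(E Y)\<^sup>2 / E(Y\<^sup>2) \<ge> 4mM / (m + M)\<^sup>2\<close>, which for
  \<open>m = a\<^sup>2\<close>, \<open>M = b\<^sup>2\<close> is \<open>K\<^sup>2\<close>. The choice of \<open>c\<close> makes \<open>(1 - c\<^sup>2)\<^sup>2 K\<^sup>2 = 1 - \<alpha>\<close>.
\<close>

lemma (in prob_space) variance_le_second_moment:
  fixes X :: "'a \<Rightarrow> real"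
  assumes "integrable M X" "integrable M (\<lambda>x. (X x)\<^sup>2)"
  shows "variance X \<le> expectation (\<lambda>x. (X x)\<^sup>2)"
  using variance_eq[OF assms] by simp

lemma (in prob_space) integrable_nonneg_bounded:
  fixes Y :: "'a \<Rightarrow> real"
  assumes [measurable]: "Y \<in> borel_measurable M"
    and bounds: "AE x in M. m \<le> Y x \<and> Y x \<le> M'" and "0 \<le> m"
  shows "integrable M Y" "integrable M (\<lambda>x. (Y x)\<^sup>2)"
proof -
  have "AE x in M. norm (Y x) \<le> M'"
    using bounds by eventually_elim (use \<open>0 \<le> m\<close> in auto)
  then show "integrable M Y"
    by (rule integrable_const_bound) measurable
  have "AE x in M. norm ((Y x)\<^sup>2) \<le> M'\<^sup>2"
    using bounds by eventually_elim (use \<open>0 \<le> m\<close> in \<open>auto intro: power_mono\<close>)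
  then show "integrable M (\<lambda>x. (Y x)\<^sup>2)"
    by (rule integrable_const_bound) measurable
qed

lemma (in prob_space) AE_bounds_ordered:
  fixes Y :: "'a \<Rightarrow> real"
  assumes "AE x in M. m \<le> Y x \<and> Y x \<le> M'"
  shows "m \<le> M'"
proof -
  from assms have "AE x in M. m \<le> M'" by eventually_elim auto
  then show ?thesis by simp
qed

text \<open>The integrated form of \<open>y \<le> y\<^sup>2 / (2t) + t/2\<close>, used only where \<open>y \<ge> \<theta> E Y\<close>.\<close>

lemma (in prob_space) expectation_le_upper_event_bound:
  fixes Y :: "'a \<Rightarrow> real" and \<theta> t :: real
  defines "A \<equiv> {x \<in> space M. \<theta> * expectation Y \<le> Y x}"
  assumes Y: "integrable M Y" and Y2: "integrable M (\<lambda>x. (Y x)\<^sup>2)"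
    and "0 \<le> \<theta> * expectation Y" and "0 < t"
  shows "(1 - \<theta>) * expectation Y \<le> expectation (\<lambda>x. (Y x)\<^sup>2) / (2 * t) + t / 2 * prob A"
proof -
  let ?\<mu> = "expectation Y"
  have [measurable]: "A \<in> sets M"
    using Y unfolding A_def by measurable
  have I: "integrable M (indicator A :: 'a \<Rightarrow> real)"
    by (rule integrable_real_indicator) (auto simp: less_top[symmetric])
  have pointwise: "Y x \<le> \<theta> * ?\<mu> + (Y x)\<^sup>2 / (2 * t) + t / 2 * indicator A x" if "x \<in> space M" for x
  proof (cases "x \<in> A")
    case True
    have "0 \<le> (Y x - t)\<^sup>2" by simp
    then have "Y x \<le> (Y x)\<^sup>2 / (2 * t) + t / 2"
      using \<open>0 < t\<close> by (simp add: field_simps power2_eq_square)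
    then show ?thesis using True \<open>0 \<le> \<theta> * ?\<mu>\<close> by simp
  next
    case False
    moreover have "0 \<le> (Y x)\<^sup>2 / (2 * t)" using \<open>0 < t\<close> by simp
    ultimately show ?thesis using that unfolding A_def by auto
  qed
  have "?\<mu> \<le> expectation (\<lambda>x. \<theta> * ?\<mu> + (Y x)\<^sup>2 / (2 * t) + t / 2 * indicator A x)"
    using Y Y2 I pointwise by (intro integral_mono) auto
  also have "\<dots> = \<theta> * ?\<mu> + expectation (\<lambda>x. (Y x)\<^sup>2) / (2 * t) + t / 2 * prob A"
    using Y2 I by (simp add: prob_space)
  finally show ?thesis by (simp add: algebra_simps)
qed

theorem (in prob_space) paley_zygmund:
  fixes Y :: "'a \<Rightarrow> real"
  assumes Y: "integrable M Y" and Y2: "integrable M (\<lambda>x. (Y x)\<^sup>2)"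
    and "0 < expectation Y" and "0 \<le> \<theta>" and "\<theta> < 1"
  shows "(1 - \<theta>)\<^sup>2 * (expectation Y)\<^sup>2
           \<le> prob {x \<in> space M. \<theta> * expectation Y \<le> Y x} * expectation (\<lambda>x. (Y x)\<^sup>2)"
    (is "_ \<le> ?p * ?V")
proof -
  define s where "s = (1 - \<theta>) * expectation Y"
  have "0 < s" using assms unfolding s_def by simp
  have bound: "s \<le> ?V / (2 * t) + t / 2 * ?p" if "0 < t" for t
    unfolding s_def using assms that by (intro expectation_le_upper_event_bound) auto
  have "0 \<le> ?V" by (intro integral_nonneg_AE) simp
  moreover have "?V \<noteq> 0"
  proof
    assume "?V = 0"
    with bound[OF \<open>0 < s\<close>] prob_le_1[of "{x \<in> space M. \<theta> * expectation Y \<le> Y x}"] \<open>0 < s\<close>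
    show False by simp
  qed
  ultimately have "0 < ?V" by linarith
  with bound[of "?V / s"] \<open>0 < s\<close> have "s \<le> s / 2 + ?V * ?p / (2 * s)"
    by (simp add: field_simps)
  with \<open>0 < s\<close> have "s\<^sup>2 \<le> ?p * ?V"
    by (simp add: field_simps power2_eq_square)
  then show ?thesis unfolding s_def by (simp add: power_mult_distrib)
qed

text \<open>Integrating \<open>(Y - m) (M' - Y) \<ge> 0\<close> gives \<open>E(Y\<^sup>2) \<le> (m + M') E Y - m M'\<close>; the claim then
  differs from its right-hand side by the square \<open>((m + M') E Y - 2 m M')\<^sup>2\<close>.\<close>

theorem (in prob_space) kantorovich_moment_inequality:
  fixes Y :: "'a \<Rightarrow> real"
  assumes Y[measurable]: "Y \<in> borel_measurable M"
    and bounds: "AE x in M. m \<le> Y x \<and> Y x \<le> M'" and "0 \<le> m"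
  shows "4 * m * M' * expectation (\<lambda>x. (Y x)\<^sup>2) \<le> (m + M')\<^sup>2 * (expectation Y)\<^sup>2"
proof -
  let ?\<mu> = "expectation Y" and ?V = "expectation (\<lambda>x. (Y x)\<^sup>2)"
  have "m \<le> M'"
    using bounds by (rule AE_bounds_ordered)
  have int: "integrable M Y" "integrable M (\<lambda>x. (Y x)\<^sup>2)"
    using bounds \<open>0 \<le> m\<close> by (auto intro: integrable_nonneg_bounded)
  have "AE x in M. (Y x)\<^sup>2 \<le> (m + M') * Y x - m * M'"
    using bounds
  proof eventually_elim
    case (elim x)
    then have "0 \<le> (Y x - m) * (M' - Y x)" by simp
    then show ?case by (simp add: algebra_simps power2_eq_square)
  qed
  then have "?V \<le> expectation (\<lambda>x. (m + M') * Y x - m * M')"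
    using int by (intro integral_mono_AE) auto
  also have "\<dots> = (m + M') * ?\<mu> - m * M'"
    using int by (simp add: prob_space)
  finally have "4 * m * M' * ?V \<le> 4 * m * M' * ((m + M') * ?\<mu> - m * M')"
    using \<open>0 \<le> m\<close> \<open>m \<le> M'\<close> by (intro mult_left_mono) auto
  also have "\<dots> = (m + M')\<^sup>2 * ?\<mu>\<^sup>2 - ((m + M') * ?\<mu> - 2 * m * M')\<^sup>2"
    by (simp add: power2_eq_square algebra_simps)
  finally show ?thesis
    using zero_le_power2[of "(m + M') * ?\<mu> - 2 * m * M'"] by linarith
qed

corollary (in prob_space) prob_ge_mean_fraction_of_bounded:
  fixes Y :: "'a \<Rightarrow> real"
  assumes Y[measurable]: "Y \<in> borel_measurable M"
    and bounds: "AE x in M. m \<le> Y x \<and> Y x \<le> M'" and "0 < m"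
    and "0 \<le> \<theta>" and "\<theta> < 1"
  shows "(1 - \<theta>)\<^sup>2 * (4 * m * M' / (m + M')\<^sup>2)
           \<le> prob {x \<in> space M. \<theta> * expectation Y \<le> Y x}"
proof -
  let ?\<mu> = "expectation Y" and ?V = "expectation (\<lambda>x. (Y x)\<^sup>2)"
    and ?p = "prob {x \<in> space M. \<theta> * expectation Y \<le> Y x}"
  have "m \<le> M'"
    using bounds by (rule AE_bounds_ordered)
  have int: "integrable M Y" "integrable M (\<lambda>x. (Y x)\<^sup>2)"
    using bounds \<open>0 < m\<close> by (auto intro: integrable_nonneg_bounded)
  have "m \<le> ?\<mu>"
    using integral_mono_AE[OF _ int(1), of "\<lambda>_. m"] bounds by (auto simp: prob_space elim: AE_mp)
  then have "0 < ?\<mu>" using \<open>0 < m\<close> by linarith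
  have PZ: "(1 - \<theta>)\<^sup>2 * ?\<mu>\<^sup>2 \<le> ?p * ?V"
    using int \<open>0 < ?\<mu>\<close> assms by (intro paley_zygmund) auto
  have KI: "4 * m * M' * ?V \<le> (m + M')\<^sup>2 * ?\<mu>\<^sup>2"
    using bounds \<open>0 < m\<close> by (intro kantorovich_moment_inequality) auto
  have "0 < (1 - \<theta>)\<^sup>2 * ?\<mu>\<^sup>2" using \<open>0 < ?\<mu>\<close> \<open>\<theta> < 1\<close> by simp
  with PZ have "0 < ?p * ?V" by linarith
  then have "0 < ?V"
    using measure_nonneg[of M "{x \<in> space M. \<theta> * expectation Y \<le> Y x}"]
    by (auto simp: zero_less_mult_iff)
  have "(1 - \<theta>)\<^sup>2 * (4 * m * M') * ?V \<le> (1 - \<theta>)\<^sup>2 * ((m + M')\<^sup>2 * ?\<mu>\<^sup>2)"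
    using KI by (simp add: mult.assoc mult_left_mono)
  also have "\<dots> \<le> (m + M')\<^sup>2 * (?p * ?V)"
    using mult_left_mono[OF PZ, of "(m + M')\<^sup>2"] by (simp add: ac_simps)
  finally have "((1 - \<theta>)\<^sup>2 * (4 * m * M')) * ?V \<le> ((m + M')\<^sup>2 * ?p) * ?V"
    by (simp add: ac_simps)
  then have "(1 - \<theta>)\<^sup>2 * (4 * m * M') \<le> (m + M')\<^sup>2 * ?p"
    using \<open>0 < ?V\<close> by (rule mult_right_le_imp_le)
  then show ?thesis
    using \<open>0 < m\<close> \<open>m \<le> M'\<close> by (simp add: field_simps)
qed

lemma threshold_from_confidence:
  fixes K \<alpha> \<theta> :: real
  assumes "0 < K" "1 - K\<^sup>2 < \<alpha>" "\<alpha> < 1" "\<theta> = 1 - sqrt (1 - \<alpha>) / K"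
  shows "0 < \<theta>" "\<theta> < 1" "(1 - \<theta>)\<^sup>2 * K\<^sup>2 = 1 - \<alpha>"
proof -
  have "sqrt (1 - \<alpha>) < sqrt (K\<^sup>2)"
    using assms(2) by (intro real_sqrt_less_mono) simp
  then have "sqrt (1 - \<alpha>) < K" using \<open>0 < K\<close> by simp
  moreover have "K * \<theta> = K - sqrt (1 - \<alpha>)" using assms(1,4) by (simp add: field_simps)
  ultimately have "0 < K * \<theta>" by linarith
  then show "0 < \<theta>" using \<open>0 < K\<close> by (simp add: zero_less_mult_iff)
  have "0 < sqrt (1 - \<alpha>) / K" using assms(1,3) by simp
  then show "\<theta> < 1" using assms(4) by linarith
  show "(1 - \<theta>)\<^sup>2 * K\<^sup>2 = 1 - \<alpha>"
    using assms by (simp add: power_divide)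
qed

lemma kantorovich_constant_eq:
  fixes a b :: real
  assumes "0 < a" "0 < b"
  shows "4 / (b / a + a / b)\<^sup>2 = 4 * a\<^sup>2 * b\<^sup>2 / (a\<^sup>2 + b\<^sup>2)\<^sup>2"
  using assms by (simp add: field_simps power2_eq_square)

theorem theorem4p1:
  fixes M :: "'a measure" and X :: "'a \<Rightarrow> real" and a b K \<alpha> c :: real
  assumes "prob_space M"
    and "X \<in> borel_measurable M"
    and "0 < a" and "a < b"
    and "prob_space.prob M {\<omega> \<in> space M. a \<le> \<bar>X \<omega>\<bar> \<and> \<bar>X \<omega>\<bar> \<le> b} = 1"
    and "K > 0" and "K\<^sup>2 = 4 / (b / a + a / b)\<^sup>2"
    and "1 - K\<^sup>2 < \<alpha>" and "\<alpha> < 1"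
    and "c\<^sup>2 = 1 - sqrt (1 - \<alpha>) / K"
  shows "prob_space.prob M {\<omega> \<in> space M. prob_space.variance M X \<le> (X \<omega>)\<^sup>2 / c\<^sup>2} \<ge> 1 - \<alpha>"
proof -
  interpret prob_space M by fact
  define \<theta> where "\<theta> = c\<^sup>2"
  have \<theta>: "0 < \<theta>" "\<theta> < 1" "(1 - \<theta>)\<^sup>2 * K\<^sup>2 = 1 - \<alpha>"
    using threshold_from_confidence[of K \<alpha> \<theta>] assms(6,8-10) unfolding \<theta>_def by auto
  have [measurable]: "X \<in> borel_measurable M" by fact
  have abs_bounds: "AE x in M. a \<le> \<bar>X x\<bar> \<and> \<bar>X x\<bar> \<le> b"
    using AE_prob_1[OF assms(5)] by auto
  then have bounds: "AE x in M. a\<^sup>2 \<le> (X x)\<^sup>2 \<and> (X x)\<^sup>2 \<le> b\<^sup>2"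
    by eventually_elim (use \<open>0 < a\<close> in \<open>auto simp flip: abs_le_square_iff\<close>)
  have "1 - \<alpha> \<le> prob {x \<in> space M. \<theta> * expectation (\<lambda>x. (X x)\<^sup>2) \<le> (X x)\<^sup>2}"
    using prob_ge_mean_fraction_of_bounded[OF _ bounds, of \<theta>] \<theta> assms(3,4,7)
    by (simp add: kantorovich_constant_eq)
  also have "\<dots> \<le> prob {x \<in> space M. variance X \<le> (X x)\<^sup>2 / c\<^sup>2}"
  proof (rule finite_measure_mono)
    have "integrable M X"
      using abs_bounds by (intro integrable_const_bound[where B = b]) auto
    then have var_le: "\<theta> * variance X \<le> \<theta> * expectation (\<lambda>x. (X x)\<^sup>2)"
      using integrable_nonneg_bounded[OF _ bounds] \<open>0 < a\<close> \<open>0 < \<theta>\<close>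
      by (intro mult_left_mono variance_le_second_moment) simp_all
    have "variance X \<le> (X x)\<^sup>2 / c\<^sup>2" if "\<theta> * expectation (\<lambda>x. (X x)\<^sup>2) \<le> (X x)\<^sup>2" for x
      using order_trans[OF var_le that] \<open>0 < \<theta>\<close> unfolding \<theta>_def[symmetric]
      by (simp add: pos_le_divide_eq mult.commute)
    then show "{x \<in> space M. \<theta> * expectation (\<lambda>x. (X x)\<^sup>2) \<le> (X x)\<^sup>2}
        \<subseteq> {x \<in> space M. variance X \<le> (X x)\<^sup>2 / c\<^sup>2}" by auto
  qed measurable
  finally show ?thesis .
qed

end
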